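(* Let $(G,\mu,[R])$ be a random-predicate $k$-player game, let $i,p\in[k]$, and let $\varepsilon\in(0,1)$ with $\mathbf{val}(G)=1-\varepsilon$. Then $\mathbf{val}(\mathcal{T}^i_p(G))=1-\varepsilon'$ for some $\varepsilon'>0$ that depends only on $\varepsilon$ and the size of $G$.
   Context: A random-predicate $k$-player game $(G,\mu,[R])$ has finite question sets $\mathcal{X}_j$, finite answer sets $\mathcal{A}_j$, a distribution $\mu$ on $\mathcal{X}_1\times\cdots\times\mathcal{X}_k$ (all probabilities assumed to be multiples of $1/M$ for some integer $M$), and predicates $V_r$, $r\in[R]$; the verifier samples $q\sim\mu$ and $r\in[R]$ uniformly and independently, player $j$ answers $\alpha^j(q|_j)$ ($q|_j$ the $j$-th coordinate), and the verifier accepts iff $V_r(q,\text{answers})=1$; the value is the maximum acceptance probability over strategies. The size of $G$ is $k\cdot M\cdot\prod_j|\mathcal{X}_j||\mathcal{A}_j|$. The $i$-link distribution $L_i(G)$: sample $v\sim\mu|_i$ (marginal on coordinate $i$), then $q,q'$ independently from $\mu$ conditioned on $q|_i=q'|_i=v$. For $q=(x^1,\dots,x^k)$, $q'=(y^1,\dots,y^k)$ let $\Pi^p((q,q'))=(y^1,\dots,y^{p-1},x^p,y^{p+1},\dots,y^k)$. The game $\mathcal{T}^i_p(G)$ (same question and answer sets): the verifier samples $(q,q')\sim L_i(G)$ and $r\in[R]$ uniformly and independently, sends the coordinates of $\tilde q=\Pi^p((q,q'))$ to the players, and on answers $a$ accepts by default if $q\neq q'$, and if $q=q'$ (so $\tilde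 q=q$) accepts iff $V_r(q,a)=1$. Its value is the maximum acceptance probability over strategies $\alpha^j:\mathcal{X}_j\to\mathcal{A}_j$. *)

theory Defs
  imports Main "HOL-Library.FuncSet" Complex_Main
begin

text \<open>Players are 0..<k; questions and answers
are encoded as natural numbers (finite sets of them), so that one can quantify over
all games inside a formula.\<close>

record game =
  gk :: nat
  gX :: "nat \<Rightarrow> nat set"
  gA :: "nat \<Rightarrow> nat set"
  gmu :: "nat list \<Rightarrow> real"
  gM :: nat                              \<comment> \<open>probabilities are multiples of 1/M\<close>
  gR :: nat                              \<comment> \<open>number of predicates\<close>
  gV :: "nat \<Rightarrow> nat list \<Rightarrow> nat list \<Rightarrow> bool"

definition questions :: "game \<Rightarrow> nat list set" where
  "questions G = {q. length q = gk G \<and> (\<forall>j<gk G. q ! j \<in> gX G j)}"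

definition wf_game :: "game \<Rightarrow> bool" where
  "wf_game G \<longleftrightarrow>
     (\<forall>j<gk G. finite (gX G j) \<and> finite (gA G j) \<and> gA G j \<noteq> {})
   \<and> gR G \<ge> 1 \<and> gM G \<ge> 1
   \<and> (\<forall>q. gmu G q \<ge> 0)
   \<and> (\<forall>q. q \<notin> questions G \<longrightarrow> gmu G q = 0)
   \<and> (\<Sum>q\<in>questions G. gmu G q) = 1
   \<and> (\<forall>q. \<exists>n::nat. gmu G q = real n / real (gM G))"

definition game_size :: "game \<Rightarrow> nat" where
  "game_size G = gk G * gM G * (\<Prod>j<gk G. card (gX G j) * card (gA G j))"

definition strategy :: "game \<Rightarrow> (nat \<Rightarrow> nat \<Rightarrow> nat) \<Rightarrow> bool" where
  "strategy G \<alpha> \<longleftrightarrow> (\<forall>j<gk G. \<forall>x\<in>gX G j. \<alpha> j x \<in> gA G j)"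

definition answers :: "game \<Rightarrow> (nat \<Rightarrow> nat \<Rightarrow> nat) \<Rightarrow> nat list \<Rightarrow> nat list" where
  "answers G \<alpha> q = map (\<lambda>j. \<alpha> j (q ! j)) [0..<gk G]"

definition pred_acc :: "game \<Rightarrow> nat list \<Rightarrow> nat list \<Rightarrow> real" where
  "pred_acc G q a = (\<Sum>r<gR G. if gV G r q a then 1 else 0) / real (gR G)"

definition acc :: "game \<Rightarrow> (nat \<Rightarrow> nat \<Rightarrow> nat) \<Rightarrow> real" where
  "acc G \<alpha> = (\<Sum>q\<in>questions G. gmu G q * pred_acc G q (answers G \<alpha> q))"

definition val :: "game \<Rightarrow> real" where
  "val G = Sup {acc G \<alpha> | \<alpha>. strategy G \<alpha>}"

definition marg :: "game \<Rightarrow> nat \<Rightarrow> nat \<Rightarrow> real" where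
  "marg G i v = (\<Sum>q\<in>{q\<in>questions G. q ! i = v}. gmu G q)"

text \<open>The i-link distribution L_i(G): sample v from the i-marginal, then q, q'
independently from mu conditioned on coordinate i being v. Probability of (q,q').\<close>
definition link :: "game \<Rightarrow> nat \<Rightarrow> nat list \<Rightarrow> nat list \<Rightarrow> real" where
  "link G i q q' =
     (if q ! i = q' ! i then
        marg G i (q ! i) * (gmu G q / marg G i (q ! i)) * (gmu G q' / marg G i (q ! i))
      else 0)"

definition mix :: "game \<Rightarrow> nat \<Rightarrow> nat list \<Rightarrow> nat list \<Rightarrow> nat list" where
  "mix G p q q' = map (\<lambda>j. if j = p then q ! j else q' ! j) [0..<gk G]"

definition accT :: "game \<Rightarrow> nat \<Rightarrow> nat \<Rightarrow> (nat \<Rightarrow> nat \<Rightarrow> nat) \<Rightarrow> real" where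
  "accT G i p \<alpha> =
     (\<Sum>q\<in>questions G. \<Sum>q'\<in>questions G.
        link G i q q' *
        (if q \<noteq> q' then 1 else pred_acc G q (answers G \<alpha> (mix G p q q'))))"

definition valT :: "game \<Rightarrow> nat \<Rightarrow> nat \<Rightarrow> real" where
  "valT G i p = Sup {accT G i p \<alpha> | \<alpha>. strategy G \<alpha>}"

end

theory Submission
  imports Defs
begin

text \<open>On the diagonal \<open>q = q'\<close> the test \<open>T\<^sup>i\<^sub>p(G)\<close> simply plays \<open>G\<close> on \<open>q\<close>, and the link
  distribution puts mass \<open>\<mu>(q)\<^sup>2 / \<mu>\<^sub>i(q\<^sub>i) \<ge> \<mu>(q)\<^sup>2 \<ge> \<mu>(q)/M\<close> there, because every positive
  probability is at least \<open>1/M\<close>. Hence every strategy loses in \<open>T\<^sup>i\<^sub>p(G)\<close> at least \<open>1/M\<close> times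
  what it loses in \<open>G\<close>, which is at least \<open>\<epsilon>\<close>; as \<open>M\<close> is bounded by the size of \<open>G\<close>,
  \<open>\<epsilon>' = \<epsilon> / (size + 1)\<close> works.\<close>

lemma finite_questions:
  assumes "wf_game G" shows "finite (questions G)"
proof -
  have "questions G \<subseteq> {xs. set xs \<subseteq> (\<Union>j<gk G. gX G j) \<and> length xs = gk G}"
    unfolding questions_def by (fastforce simp: in_set_conv_nth)
  moreover have "finite (\<Union>j<gk G. gX G j)" using assms unfolding wf_game_def by auto
  ultimately show ?thesis using finite_lists_length_eq finite_subset by blast
qed

lemma pred_acc_nonneg: "0 \<le> pred_acc G q a"
  unfolding pred_acc_def by (simp add: sum_nonneg)

lemma pred_acc_le_1:
  assumes "wf_game G" shows "pred_acc G q a \<le> 1"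
proof -
  have "(\<Sum>r<gR G. if gV G r q a then 1 else 0::real) \<le> (\<Sum>r<gR G. 1)"
    by (rule sum_mono) auto
  moreover have "gR G \<ge> 1" using assms unfolding wf_game_def by auto
  ultimately show ?thesis unfolding pred_acc_def by (simp add: divide_le_eq_1)
qed

lemma acc_le_1:
  assumes wf: "wf_game G" shows "acc G \<alpha> \<le> 1"
proof -
  have "acc G \<alpha> \<le> (\<Sum>q\<in>questions G. gmu G q)" unfolding acc_def
    using wf pred_acc_le_1[OF wf] by (intro sum_mono) (simp add: wf_game_def mult_left_le)
  then show ?thesis using wf unfolding wf_game_def by simp
qed

lemma acc_le_val:
  assumes "wf_game G" and "strategy G \<alpha>" shows "acc G \<alpha> \<le> val G"
proof -
  have "bdd_above {acc G \<alpha> | \<alpha>. strategy G \<alpha>}"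
    using acc_le_1[OF assms(1)] by (intro bdd_aboveI[of _ 1]) auto
  then show ?thesis unfolding val_def using assms(2) by (intro cSup_upper) auto
qed

lemma strategy_exists:
  assumes "wf_game G" shows "\<exists>\<alpha>. strategy G \<alpha>"
proof
  show "strategy G (\<lambda>j x. SOME a. a \<in> gA G j)"
    using assms unfolding strategy_def wf_game_def by (auto simp: some_in_eq)
qed

lemma gM_le_game_size:
  assumes "wf_game G" and "0 < gk G" shows "gM G \<le> game_size G"
proof -
  obtain q0 where q0: "q0 \<in> questions G"
    using assms(1) unfolding wf_game_def by (metis sum.empty zero_neq_one ex_in_conv)
  have P: "1 \<le> (\<Prod>j<gk G. card (gX G j) * card (gA G j))"
  proof (rule prod_ge_1)
    fix j assume j: "j \<in> {..<gk G}"
    have "q0 ! j \<in> gX G j" using q0 j unfolding questions_def by auto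
    then show "1 \<le> card (gX G j) * card (gA G j)"
      using assms(1) j unfolding wf_game_def by (auto simp: Suc_le_eq card_gt_0_iff)
  qed
  have "gM G * 1 \<le> gk G * gM G" using assms(2) by simp
  from mult_le_mono[OF this P]
  have "gM G * 1 * 1 \<le> gk G * gM G * (\<Prod>j<gk G. card (gX G j) * card (gA G j))" .
  then show ?thesis unfolding game_size_def by simp
qed

lemma gmu_ge_inverse_gM:
  assumes "wf_game G" and "0 < gmu G q" shows "1 / real (gM G) \<le> gmu G q"
proof -
  obtain n :: nat where n: "gmu G q = real n / real (gM G)"
    using assms(1) unfolding wf_game_def by blast
  with assms(2) have "1 \<le> real n" by (cases n) auto
  then show ?thesis using n by (simp add: divide_right_mono)
qed

lemma marg_nonneg:
  assumes "wf_game G" shows "0 \<le> marg G i v"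
  using assms unfolding marg_def wf_game_def by (simp add: sum_nonneg)

lemma marg_le_1:
  assumes wf: "wf_game G" shows "marg G i v \<le> 1"
proof -
  have "marg G i v \<le> (\<Sum>q\<in>questions G. gmu G q)" unfolding marg_def
    using wf finite_questions[OF wf] by (intro sum_mono2) (auto simp: wf_game_def)
  then show ?thesis using wf unfolding wf_game_def by simp
qed

lemma gmu_le_marg:
  assumes wf: "wf_game G" and q: "q \<in> questions G" shows "gmu G q \<le> marg G i (q ! i)"
proof -
  have "gmu G q = (\<Sum>q'\<in>{q}. gmu G q')" by simp
  also have "\<dots> \<le> marg G i (q ! i)" unfolding marg_def
    using wf q finite_questions[OF wf] by (intro sum_mono2) (auto simp: wf_game_def)
  finally show ?thesis .
qed

lemma link_nonneg:
  assumes "wf_game G" shows "0 \<le> link G i q q'"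
  using assms marg_nonneg[OF assms] unfolding link_def wf_game_def by auto

lemma sum_link_le_gmu:
  assumes wf: "wf_game G" shows "(\<Sum>q'\<in>questions G. link G i q q') \<le> gmu G q"
proof (cases "marg G i (q ! i) = 0")
  case True
  then have "link G i q q' = 0" for q' unfolding link_def True by simp
  then show ?thesis using wf unfolding wf_game_def by simp
next
  case False
  define m where "m = marg G i (q ! i)"
  have m: "0 < m" using False marg_nonneg[OF wf] m_def by (simp add: order_less_le)
  have "(\<Sum>q'\<in>questions G. link G i q q')
      = (\<Sum>q'\<in>questions G. if q' ! i = q ! i then gmu G q * gmu G q' / m else 0)"
    unfolding link_def m_def[symmetric] using m by (intro sum.cong) auto
  also have "\<dots> = (\<Sum>q'\<in>{q'\<in>questions G. q' ! i = q ! i}. gmu G q * gmu G q' / m)"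
    using finite_questions[OF wf] by (simp add: sum.inter_filter)
  also have "\<dots> = gmu G q / m * (\<Sum>q'\<in>{q'\<in>questions G. q' ! i = q ! i}. gmu G q')"
    by (simp add: sum_distrib_left)
  also have "(\<Sum>q'\<in>{q'\<in>questions G. q' ! i = q ! i}. gmu G q') = m"
    unfolding m_def marg_def by (rule sum.cong) auto
  finally show ?thesis using m by simp
qed

lemma link_diagonal_ge:
  assumes wf: "wf_game G" and q: "q \<in> questions G"
  shows "gmu G q / real (gM G) \<le> link G i q q"
proof (cases "0 < gmu G q")
  case False
  moreover have "0 \<le> gmu G q" using wf unfolding wf_game_def by simp
  ultimately have "gmu G q = 0" by simp
  then show ?thesis using link_nonneg[OF wf] by simp
next
  case True
  define m where "m = marg G i (q ! i)"
  have m: "0 < m" "m \<le> 1"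
    using gmu_le_marg[OF wf q, of i] marg_le_1[OF wf, of i] True unfolding m_def by auto
  have "gmu G q / real (gM G) = gmu G q * (1 / real (gM G))" by simp
  also have "\<dots> \<le> gmu G q * gmu G q"
    using True gmu_ge_inverse_gM[OF wf True] by (intro mult_left_mono) auto
  also have "\<dots> \<le> gmu G q * gmu G q / m"
    using m True by (simp add: le_divide_eq mult_left_le)
  also have "\<dots> = link G i q q"
    unfolding link_def m_def[symmetric] using m by (simp add: field_simps)
  finally show ?thesis .
qed

lemma mix_self:
  assumes "q \<in> questions G" shows "mix G p q q = q"
  using assms unfolding mix_def questions_def by (metis (mono_tags, lifting) mem_Collect_eq map_nth)

lemma accT_row_le:
  assumes wf: "wf_game G" and q: "q \<in> questions G"
  shows "(\<Sum>q'\<in>questions G. link G i q q' *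
            (if q \<noteq> q' then 1 else pred_acc G q (answers G \<alpha> (mix G p q q'))))
         \<le> gmu G q - gmu G q * (1 - pred_acc G q (answers G \<alpha> q)) / real (gM G)"
proof -
  define a where "a = pred_acc G q (answers G \<alpha> q)"
  have "(\<Sum>q'\<in>questions G. link G i q q' *
            (if q \<noteq> q' then 1 else pred_acc G q (answers G \<alpha> (mix G p q q'))))
      = (\<Sum>q'\<in>questions G. link G i q q' - (if q = q' then link G i q q * (1 - a) else 0))"
    by (intro sum.cong) (auto simp: mix_self[OF q] a_def algebra_simps)
  also have "\<dots> = (\<Sum>q'\<in>questions G. link G i q q') - link G i q q * (1 - a)"
    using q finite_questions[OF wf] by (simp add: sum_subtractf)
  also have "\<dots> \<le> gmu G q - gmu G q * (1 - a) / real (gM G)"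
  proof -
    have "gmu G q / real (gM G) * (1 - a) \<le> link G i q q * (1 - a)"
      using link_diagonal_ge[OF wf q] pred_acc_le_1[OF wf] unfolding a_def
      by (intro mult_right_mono) auto
    then show ?thesis using sum_link_le_gmu[OF wf, of i q] by simp
  qed
  finally show ?thesis unfolding a_def .
qed

lemma accT_le:
  assumes wf: "wf_game G"
  shows "accT G i p \<alpha> \<le> 1 - (1 - acc G \<alpha>) / real (gM G)"
proof -
  define a where "a q = pred_acc G q (answers G \<alpha> q)" for q
  have mu_sum: "(\<Sum>q\<in>questions G. gmu G q) = 1" using wf unfolding wf_game_def by simp
  have "accT G i p \<alpha> \<le> (\<Sum>q\<in>questions G. gmu G q - gmu G q * (1 - a q) / real (gM G))"
    unfolding accT_def a_def by (intro sum_mono accT_row_le[OF wf])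
  also have "\<dots> = (\<Sum>q\<in>questions G. gmu G q)
      - (\<Sum>q\<in>questions G. (gmu G q - gmu G q * a q) / real (gM G))"
    by (simp add: sum_subtractf right_diff_distrib)
  also have "\<dots> = 1 - (\<Sum>q\<in>questions G. gmu G q - gmu G q * a q) / real (gM G)"
    using mu_sum by (simp add: sum_divide_distrib)
  also have "(\<Sum>q\<in>questions G. gmu G q - gmu G q * a q) = 1 - acc G \<alpha>"
    using mu_sum unfolding acc_def a_def by (simp add: sum_subtractf)
  finally show ?thesis .
qed

lemma valT_le:
  assumes wf: "wf_game G" and k: "0 < gk G" and \<epsilon>: "0 \<le> \<epsilon>" and v: "val G \<le> 1 - \<epsilon>"
  shows "valT G i p \<le> 1 - \<epsilon> / (real (game_size G) + 1)"
proof -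
  have M: "1 \<le> gM G" using wf unfolding wf_game_def by simp
  have size: "real (gM G) \<le> real (game_size G) + 1" using gM_le_game_size[OF wf k] by simp
  have "accT G i p \<alpha> \<le> 1 - \<epsilon> / (real (game_size G) + 1)" if "strategy G \<alpha>" for \<alpha>
  proof -
    have "accT G i p \<alpha> \<le> 1 - (1 - acc G \<alpha>) / real (gM G)" by (rule accT_le[OF wf])
    also have "\<dots> \<le> 1 - \<epsilon> / real (gM G)"
      using acc_le_val[OF wf that] v M by (simp add: divide_right_mono)
    also have "\<dots> \<le> 1 - \<epsilon> / (real (game_size G) + 1)"
      using size \<epsilon> M by (simp add: frac_le)
    finally show ?thesis .
  qed
  then show ?thesis
    unfolding valT_def using strategy_exists[OF wf] by (intro cSup_least) auto
qed

theorem claim3p4: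
  shows "\<exists>\<delta> :: real \<Rightarrow> nat \<Rightarrow> real.
     (\<forall>\<epsilon> s. 0 < \<epsilon> \<and> \<epsilon> < 1 \<longrightarrow> 0 < \<delta> \<epsilon> s) \<and>
     (\<forall>G i p \<epsilon>. wf_game G \<and> i < gk G \<and> p < gk G \<and> 0 < \<epsilon> \<and> \<epsilon> < 1 \<and> val G = 1 - \<epsilon>
        \<longrightarrow> valT G i p \<le> 1 - \<delta> \<epsilon> (game_size G))"
proof (intro exI[of _ "\<lambda>\<epsilon> s. \<epsilon> / (real s + 1)"] conjI allI impI)
  fix \<epsilon> :: real and s :: nat
  assume "0 < \<epsilon> \<and> \<epsilon> < 1"
  then show "0 < \<epsilon> / (real s + 1)" by simp
next
  fix G i p \<epsilon>
  assume "wf_game G \<and> i < gk G \<and> p < gk G \<and> 0 < \<epsilon> \<and> \<epsilon> < 1 \<and> val G = 1 - \<epsilon>"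
  then show "valT G i p \<le> 1 - \<epsilon> / (real (game_size G) + 1)"
    by (intro valT_le) auto
qed

end
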